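(* Let $G(\mathcal Y)$ be a developable complex of groups over a connected scwol $\mathcal Y$, let $T$ be a maximal tree in $\mathcal Y$, and identify each local group $G_\sigma$ with its image in $\pi_1(G(\mathcal Y),T)$ under $\iota_T$. Let $N_T$ be the kernel of the action homomorphism $\pi_1(G(\mathcal Y),T)\to\mathrm{Aut}(D(\mathcal Y,T))$. Then: (1) $N_T\le G_\sigma$ for every $\sigma\in V(\mathcal Y)$; (2) $\psi_a(N_T)=N_T$ for every $a\in E(\mathcal Y)$; (3) $N_T\trianglelefteq G_\sigma$ for every $\sigma\in V(\mathcal Y)$; (4) if $N'$ is any subgroup of $\pi_1(G(\mathcal Y),T)$ with $N'\le G_\sigma$ and $N'\trianglelefteq G_\sigma$ for every $\sigma\in V(\mathcal Y)$ and $\psi_a(N')=N'$ for every $a\in E(\mathcal Y)$, then $N'\le N_T$.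
   Context: Scwols. A scwol $\mathcal X$ consists of a set $V(\mathcal X)$ of vertices, a set $E(\mathcal X)$ of edges, maps $i,t:E(\mathcal X)\to V(\mathcal X)$, and a composition $(a,b)\mapsto ab\in E(\mathcal X)$ defined on $E^{(2)}(\mathcal X)=\{(a,b): i(a)=t(b)\}$, such that $i(ab)=i(b)$, $t(ab)=t(a)$, $(ab)c=a(bc)$ whenever defined, and $i(a)\neq t(a)$ for all $a$. For a vertex $\alpha$ put $i(\alpha)=t(\alpha)=\alpha$. The geometric realization $|\mathcal X|$ has one $k$-simplex for each sequence of $k$ composable edges; $\mathcal X$ is connected if $|\mathcal X|$ is. A maximal tree in $\mathcal X$ means a maximal tree in the 1-skeleton of $|\mathcal X|$. Complexes of groups. A complex of groups $G(\mathcal Y)=(G_\sigma,\psi_a,g_{a,b})$ over a scwol $\mathcal Y$ consists of groups $G_\sigma$ ($\sigma\in V(\mathcal Y)$), injective homomorphisms $\psi_a:G_{i(a)}\to G_{t(a)}$ ($a\in E(\mathcal Y)$) and elements $g_{a,b}\in G_{t(a)}$ ($(a,b)\in E^{(2)}(\mathcal Y)$) with $\mathrm{Ad}(g_{a,b})\psi_{ab}=\psi_a\psi_b$ and $\psi_a(g_{b,c})g_{a,bc}=g_{a,b}g_{ab,c}$. It is developable if it is isomorphic to the complex of groups associated to an action of a group on a scwol; for developable $G(\mathcal Y)$ over connected $\mathcal Y$, the maps $G_\sigma\to\pi_1(G(\mathcal Y),T)$ are injective. Fundamental group and universal cover. The universal group $FG(\mathcal Y)$ is generated by $\bigsqcup_\sigma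 G_\sigma$ and symbols $a^+,a^-$ ($a\in E(\mathcal Y)$) subject to: the relations of each $G_\sigma$; $(a^\pm)^{-1}=a^\mp$; $a^+b^+=g_{a,b}(ab)^+$ for $(a,b)\in E^{(2)}(\mathcal Y)$; $\psi_a(g)=a^+ga^-$ for $g\in G_{i(a)}$. For a maximal tree $T$ in $\mathcal Y$, $\pi_1(G(\mathcal Y),T)$ is the quotient of $FG(\mathcal Y)$ by the additional relations $a^+=1$ for $a$ in $T$; $\iota_T$ sends $g\in G_\sigma$ to its image and $a$ to the image of $a^+$. The universal cover $D(\mathcal Y,T)$ is the scwol with vertices $([g],\sigma)$, $\sigma\in V(\mathcal Y)$, $[g]\in \pi_1(G(\mathcal Y),T)/\iota_T(G_\sigma)$, edges $([g],a)$, $a\in E(\mathcal Y)$, $[g]\in\pi_1(G(\mathcal Y),T)/\iota_T(G_{i(a)})$, $i([g],a)=([g],i(a))$, $t([g],a)=([g\,\iota_T(a)^{-1}],t(a))$, and $([g],a)([h],b)=([h],ab)$ when $(a,b)\in E^{(2)}(\mathcal Y)$ and $g^{-1}h\,\iota_T(b)^{-1}\in\iota_T(G_{i(a)})$; $\pi_1(G(\mathcal Y),T)$ acts by $h\cdot([g],\alpha)=([hg],\alpha)$. *)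

theory Defs
  imports "HOL-Algebra.Algebra"
begin

record ('v, 'e) scwol =
  sV  :: "'v set"
  sE  :: "'e set"
  ini :: "'e \<Rightarrow> 'v"
  ter :: "'e \<Rightarrow> 'v"
  cmp :: "'e \<Rightarrow> 'e \<Rightarrow> 'e"

definition comp2 :: "('v, 'e) scwol \<Rightarrow> ('e \<times> 'e) set" where
  "comp2 W = {(a, b). a \<in> sE W \<and> b \<in> sE W \<and> ini W a = ter W b}"

definition scwol :: "('v, 'e) scwol \<Rightarrow> bool" where
  "scwol W \<longleftrightarrow>
     (\<forall>a \<in> sE W. ini W a \<in> sV W \<and> ter W a \<in> sV W \<and> ini W a \<noteq> ter W a) \<and>
     (\<forall>(a, b) \<in> comp2 W. cmp W a b \<in> sE W \<and>
        ini W (cmp W a b) = ini W b \<and> ter W (cmp W a b) = ter W a) \<and>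
     (\<forall>a b c. (a, b) \<in> comp2 W \<longrightarrow> (b, c) \<in> comp2 W \<longrightarrow>
        cmp W (cmp W a b) c = cmp W a (cmp W b c))"

text \<open>1-skeleton of the geometric realization: vertices sV, one (unoriented) edge per a.\<close>
definition edge_rel :: "('v, 'e) scwol \<Rightarrow> 'e set \<Rightarrow> ('v \<times> 'v) set" where
  "edge_rel W ES = {(ini W a, ter W a) | a. a \<in> ES} \<union> {(ter W a, ini W a) | a. a \<in> ES}"

definition graph_connected :: "('v, 'e) scwol \<Rightarrow> 'v set \<Rightarrow> 'e set \<Rightarrow> bool" where
  "graph_connected W VS ES \<longleftrightarrow>
     VS \<noteq> {} \<and> (\<forall>x \<in> VS. \<forall>y \<in> VS. (x, y) \<in> (edge_rel W ES)\<^sup>*)"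

text \<open>|W| is connected iff its 1-skeleton is connected.\<close>
definition scwol_connected :: "('v, 'e) scwol \<Rightarrow> bool" where
  "scwol_connected W \<longleftrightarrow> (\<forall>x \<in> sV W. \<forall>y \<in> sV W. (x, y) \<in> (edge_rel W (sE W))\<^sup>*)"

text \<open>A tree in the 1-skeleton: a connected subgraph in which every edge is a bridge.\<close>
definition is_subtree :: "('v, 'e) scwol \<Rightarrow> 'v set \<Rightarrow> 'e set \<Rightarrow> bool" where
  "is_subtree W VT T \<longleftrightarrow>
     VT \<subseteq> sV W \<and> T \<subseteq> sE W \<and> (\<forall>a \<in> T. ini W a \<in> VT \<and> ter W a \<in> VT) \<and>
     graph_connected W VT T \<and> (\<forall>a \<in> T. \<not> graph_connected W VT (T - {a}))"

definition maximal_tree :: "('v, 'e) scwol \<Rightarrow> 'e set \<Rightarrow> bool" where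
  "maximal_tree W T \<longleftrightarrow>
     (\<exists>VT. is_subtree W VT T \<and>
        \<not> (\<exists>VT' T'. is_subtree W VT' T' \<and> VT \<subseteq> VT' \<and> T \<subseteq> T' \<and> (VT, T) \<noteq> (VT', T')))"

record ('v, 'e, 'g) cog =
  grp   :: "'v \<Rightarrow> 'g monoid"
  psi   :: "'e \<Rightarrow> 'g \<Rightarrow> 'g"
  twist :: "'e \<Rightarrow> 'e \<Rightarrow> 'g"

definition complex_of_groups :: "('v, 'e) scwol \<Rightarrow> ('v, 'e, 'g) cog \<Rightarrow> bool" where
  "complex_of_groups Y C \<longleftrightarrow>
     scwol Y \<and>
     (\<forall>\<sigma> \<in> sV Y. group (grp C \<sigma>)) \<and>
     (\<forall>a \<in> sE Y. psi C a \<in> hom (grp C (ini Y a)) (grp C (ter Y a)) \<and>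
        inj_on (psi C a) (carrier (grp C (ini Y a)))) \<and>
     (\<forall>(a, b) \<in> comp2 Y. twist C a b \<in> carrier (grp C (ter Y a)) \<and>
        (\<forall>g \<in> carrier (grp C (ini Y b)).
           twist C a b \<otimes>\<^bsub>grp C (ter Y a)\<^esub> psi C (cmp Y a b) g
             \<otimes>\<^bsub>grp C (ter Y a)\<^esub> inv\<^bsub>grp C (ter Y a)\<^esub> (twist C a b)
           = psi C a (psi C b g))) \<and>
     (\<forall>a b c. (a, b) \<in> comp2 Y \<longrightarrow> (b, c) \<in> comp2 Y \<longrightarrow>
        psi C a (twist C b c) \<otimes>\<^bsub>grp C (ter Y a)\<^esub> twist C a (cmp Y b c)
        = twist C a b \<otimes>\<^bsub>grp C (ter Y a)\<^esub> twist C (cmp Y a b) c)"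

text \<open>Isomorphism of complexes of groups over the identity of Y
  (phi_sigma isomorphisms, elements phi(a) in H_{t(a)}).\<close>
definition cog_iso ::
  "('v, 'e) scwol \<Rightarrow> ('v, 'e, 'g) cog \<Rightarrow> ('v, 'e, 'h) cog \<Rightarrow>
   ('v \<Rightarrow> 'g \<Rightarrow> 'h) \<Rightarrow> ('e \<Rightarrow> 'h) \<Rightarrow> bool" where
  "cog_iso Y C D \<phi> \<phi>e \<longleftrightarrow>
     (\<forall>\<sigma> \<in> sV Y. \<phi> \<sigma> \<in> iso (grp C \<sigma>) (grp D \<sigma>)) \<and>
     (\<forall>a \<in> sE Y. \<phi>e a \<in> carrier (grp D (ter Y a)) \<and>
        (\<forall>g \<in> carrier (grp C (ini Y a)).
           \<phi>e a \<otimes>\<^bsub>grp D (ter Y a)\<^esub> psi D a (\<phi> (ini Y a) g)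
             \<otimes>\<^bsub>grp D (ter Y a)\<^esub> inv\<^bsub>grp D (ter Y a)\<^esub> (\<phi>e a)
           = \<phi> (ter Y a) (psi C a g))) \<and>
     (\<forall>(a, b) \<in> comp2 Y.
        \<phi> (ter Y a) (twist C a b) \<otimes>\<^bsub>grp D (ter Y a)\<^esub> \<phi>e (cmp Y a b)
        = \<phi>e a \<otimes>\<^bsub>grp D (ter Y a)\<^esub> psi D a (\<phi>e b)
            \<otimes>\<^bsub>grp D (ter Y a)\<^esub> twist D a b)"

section \<open>Group actions on scwols and the associated complex of groups\<close>

definition scwol_aut :: "('w, 'f) scwol \<Rightarrow> ('w \<Rightarrow> 'w) \<Rightarrow> ('f \<Rightarrow> 'f) \<Rightarrow> bool" where
  "scwol_aut W fV fE \<longleftrightarrow>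
     bij_betw fV (sV W) (sV W) \<and> bij_betw fE (sE W) (sE W) \<and>
     (\<forall>a \<in> sE W. ini W (fE a) = fV (ini W a) \<and> ter W (fE a) = fV (ter W a)) \<and>
     (\<forall>(a, b) \<in> comp2 W. fE (cmp W a b) = cmp W (fE a) (fE b))"

definition scwol_action ::
  "'x monoid \<Rightarrow> ('w, 'f) scwol \<Rightarrow> ('x \<Rightarrow> 'w \<Rightarrow> 'w) \<Rightarrow> ('x \<Rightarrow> 'f \<Rightarrow> 'f) \<Rightarrow> bool" where
  "scwol_action \<Gamma> W aV aE \<longleftrightarrow>
     group \<Gamma> \<and> scwol W \<and>
     (\<forall>\<gamma> \<in> carrier \<Gamma>. scwol_aut W (aV \<gamma>) (aE \<gamma>)) \<and>
     (\<forall>x \<in> sV W. aV \<one>\<^bsub>\<Gamma>\<^esub> x = x) \<and> (\<forall>a \<in> sE W. aE \<one>\<^bsub>\<Gamma>\<^esub> a = a) \<and>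
     (\<forall>\<gamma> \<in> carrier \<Gamma>. \<forall>\<delta> \<in> carrier \<Gamma>.
        (\<forall>x \<in> sV W. aV (\<gamma> \<otimes>\<^bsub>\<Gamma>\<^esub> \<delta>) x = aV \<gamma> (aV \<delta> x)) \<and>
        (\<forall>a \<in> sE W. aE (\<gamma> \<otimes>\<^bsub>\<Gamma>\<^esub> \<delta>) a = aE \<gamma> (aE \<delta> a))) \<and>
     (\<forall>\<gamma> \<in> carrier \<Gamma>. \<forall>a \<in> sE W. aV \<gamma> (ini W a) \<noteq> ter W a) \<and>
     (\<forall>\<gamma> \<in> carrier \<Gamma>. \<forall>a \<in> sE W. aV \<gamma> (ini W a) = ini W a \<longrightarrow> aE \<gamma> a = a)"

text \<open>(pV, pE) is the quotient map W -> Gamma\W followed by an isomorphism Gamma\W = Y.\<close>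
definition quotient_proj ::
  "'x monoid \<Rightarrow> ('w, 'f) scwol \<Rightarrow> ('x \<Rightarrow> 'w \<Rightarrow> 'w) \<Rightarrow> ('x \<Rightarrow> 'f \<Rightarrow> 'f) \<Rightarrow>
   ('v, 'e) scwol \<Rightarrow> ('w \<Rightarrow> 'v) \<Rightarrow> ('f \<Rightarrow> 'e) \<Rightarrow> bool" where
  "quotient_proj \<Gamma> W aV aE Y pV pE \<longleftrightarrow>
     pV ` sV W = sV Y \<and> pE ` sE W = sE Y \<and>
     (\<forall>a \<in> sE W. pV (ini W a) = ini Y (pE a) \<and> pV (ter W a) = ter Y (pE a)) \<and>
     (\<forall>(a, b) \<in> comp2 W. pE (cmp W a b) = cmp Y (pE a) (pE b)) \<and>
     (\<forall>x \<in> sV W. \<forall>y \<in> sV W. pV x = pV y \<longleftrightarrow> (\<exists>\<gamma> \<in> carrier \<Gamma>. aV \<gamma> x = y)) \<and>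
     (\<forall>a \<in> sE W. \<forall>b \<in> sE W. pE a = pE b \<longleftrightarrow> (\<exists>\<gamma> \<in> carrier \<Gamma>. aE \<gamma> a = b))"

definition lift_edge ::
  "('w, 'f) scwol \<Rightarrow> ('v, 'e) scwol \<Rightarrow> ('f \<Rightarrow> 'e) \<Rightarrow> ('v \<Rightarrow> 'w) \<Rightarrow> 'e \<Rightarrow> 'f" where
  "lift_edge W Y pE lift a = (THE e. e \<in> sE W \<and> ini W e = lift (ini Y a) \<and> pE e = a)"

definition assoc_cog ::
  "'x monoid \<Rightarrow> ('w, 'f) scwol \<Rightarrow> ('x \<Rightarrow> 'w \<Rightarrow> 'w) \<Rightarrow> ('v, 'e) scwol \<Rightarrow>
   ('v \<Rightarrow> 'w) \<Rightarrow> ('e \<Rightarrow> 'x) \<Rightarrow> ('v, 'e, 'x) cog" where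
  "assoc_cog \<Gamma> W aV Y lift h =
     \<lparr> grp = (\<lambda>\<sigma>. \<Gamma>\<lparr>carrier := {\<gamma> \<in> carrier \<Gamma>. aV \<gamma> (lift \<sigma>) = lift \<sigma>}\<rparr>),
       psi = (\<lambda>a \<gamma>. h a \<otimes>\<^bsub>\<Gamma>\<^esub> \<gamma> \<otimes>\<^bsub>\<Gamma>\<^esub> inv\<^bsub>\<Gamma>\<^esub> (h a)),
       twist = (\<lambda>a b. h a \<otimes>\<^bsub>\<Gamma>\<^esub> h b \<otimes>\<^bsub>\<Gamma>\<^esub> inv\<^bsub>\<Gamma>\<^esub> (h (cmp Y a b))) \<rparr>"

text \<open>G(Y) is isomorphic to the complex of groups associated to the action of Gamma on W
  (with Y identified with Gamma\W via (pV, pE)).\<close>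
definition developable_via ::
  "('v, 'e) scwol \<Rightarrow> ('v, 'e, 'g) cog \<Rightarrow> 'x monoid \<Rightarrow> ('w, 'f) scwol \<Rightarrow>
   ('x \<Rightarrow> 'w \<Rightarrow> 'w) \<Rightarrow> ('x \<Rightarrow> 'f \<Rightarrow> 'f) \<Rightarrow> ('w \<Rightarrow> 'v) \<Rightarrow> ('f \<Rightarrow> 'e) \<Rightarrow> bool" where
  "developable_via Y C \<Gamma> W aV aE pV pE \<longleftrightarrow>
     scwol_action \<Gamma> W aV aE \<and> quotient_proj \<Gamma> W aV aE Y pV pE \<and>
     (\<exists>lift h \<phi> \<phi>e.
        (\<forall>\<sigma> \<in> sV Y. lift \<sigma> \<in> sV W \<and> pV (lift \<sigma>) = \<sigma>) \<and>
        (\<forall>a \<in> sE Y. h a \<in> carrier \<Gamma> \<and>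
           aV (h a) (ter W (lift_edge W Y pE lift a)) = lift (ter Y a)) \<and>
        cog_iso Y C (assoc_cog \<Gamma> W aV Y lift h) \<phi> \<phi>e)"

section \<open>The fundamental group pi_1(G(Y),T) by generators and relations\<close>

datatype ('v, 'g, 'e) gen = GL 'v 'g | EP 'e | EM 'e

definition valid_gen :: "('v, 'e) scwol \<Rightarrow> ('v, 'e, 'g) cog \<Rightarrow> ('v, 'g, 'e) gen \<Rightarrow> bool" where
  "valid_gen Y C l = (case l of
      GL \<sigma> g \<Rightarrow> \<sigma> \<in> sV Y \<and> g \<in> carrier (grp C \<sigma>)
    | EP a \<Rightarrow> a \<in> sE Y
    | EM a \<Rightarrow> a \<in> sE Y)"

definition valid_word :: "('v, 'e) scwol \<Rightarrow> ('v, 'e, 'g) cog \<Rightarrow> ('v, 'g, 'e) gen list \<Rightarrow> bool" where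
  "valid_word Y C w \<longleftrightarrow> (\<forall>l \<in> set w. valid_gen Y C l)"

text \<open>Defining relations; K is the set of edges a with the extra relation a^+ = 1.\<close>
definition basic_rel ::
  "('v, 'e) scwol \<Rightarrow> ('v, 'e, 'g) cog \<Rightarrow> 'e set \<Rightarrow>
   (('v, 'g, 'e) gen list \<times> ('v, 'g, 'e) gen list) set" where
  "basic_rel Y C K =
     {([GL \<sigma> g, GL \<sigma> g'], [GL \<sigma> (g \<otimes>\<^bsub>grp C \<sigma>\<^esub> g')]) | \<sigma> g g'.
        \<sigma> \<in> sV Y \<and> g \<in> carrier (grp C \<sigma>) \<and> g' \<in> carrier (grp C \<sigma>)} \<union>
     {([GL \<sigma> \<one>\<^bsub>grp C \<sigma>\<^esub>], []) | \<sigma>. \<sigma> \<in> sV Y} \<union>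
     {([EP a, EM a], []) | a. a \<in> sE Y} \<union>
     {([EM a, EP a], []) | a. a \<in> sE Y} \<union>
     {([EP a, EP b], [GL (ter Y a) (twist C a b), EP (cmp Y a b)]) | a b. (a, b) \<in> comp2 Y} \<union>
     {([GL (ter Y a) (psi C a g)], [EP a, GL (ini Y a) g, EM a]) | a g.
        a \<in> sE Y \<and> g \<in> carrier (grp C (ini Y a))} \<union>
     {([EP a], []) | a. a \<in> K \<and> a \<in> sE Y}"

inductive pres_eq for Y :: "('v, 'e) scwol" and C :: "('v, 'e, 'g) cog" and K :: "'e set" where
  pe_refl: "valid_word Y C w \<Longrightarrow> pres_eq Y C K w w"
| pe_sym: "pres_eq Y C K w w' \<Longrightarrow> pres_eq Y C K w' w"
| pe_trans: "pres_eq Y C K w w' \<Longrightarrow> pres_eq Y C K w' w'' \<Longrightarrow> pres_eq Y C K w w''"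
| pe_rel: "(l, r) \<in> basic_rel Y C K \<Longrightarrow> valid_word Y C u \<Longrightarrow> valid_word Y C v \<Longrightarrow>
           pres_eq Y C K (u @ l @ v) (u @ r @ v)"

definition pres_class :: "('v, 'e) scwol \<Rightarrow> ('v, 'e, 'g) cog \<Rightarrow> 'e set \<Rightarrow>
    ('v, 'g, 'e) gen list \<Rightarrow> ('v, 'g, 'e) gen list set" where
  "pres_class Y C K w = {w'. pres_eq Y C K w w'}"

definition pres_group :: "('v, 'e) scwol \<Rightarrow> ('v, 'e, 'g) cog \<Rightarrow> 'e set \<Rightarrow>
    ('v, 'g, 'e) gen list set monoid" where
  "pres_group Y C K =
     \<lparr> carrier = pres_class Y C K ` {w. valid_word Y C w},
       monoid.mult = (\<lambda>A B. {w. \<exists>x \<in> A. \<exists>y \<in> B. pres_eq Y C K (x @ y) w}),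
       one = pres_class Y C K [] \<rparr>"

abbreviation FG :: "('v, 'e) scwol \<Rightarrow> ('v, 'e, 'g) cog \<Rightarrow> ('v, 'g, 'e) gen list set monoid" where
  "FG Y C \<equiv> pres_group Y C {}"

definition pi1 :: "('v, 'e) scwol \<Rightarrow> ('v, 'e, 'g) cog \<Rightarrow> 'e set \<Rightarrow>
    ('v, 'g, 'e) gen list set monoid" where
  "pi1 Y C T = pres_group Y C T"

definition iotaT :: "('v, 'e) scwol \<Rightarrow> ('v, 'e, 'g) cog \<Rightarrow> 'e set \<Rightarrow>
    'v \<Rightarrow> 'g \<Rightarrow> ('v, 'g, 'e) gen list set" where
  "iotaT Y C T \<sigma> g = pres_class Y C T [GL \<sigma> g]"

definition iotaT_edge :: "('v, 'e) scwol \<Rightarrow> ('v, 'e, 'g) cog \<Rightarrow> 'e set \<Rightarrow>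
    'e \<Rightarrow> ('v, 'g, 'e) gen list set" where
  "iotaT_edge Y C T a = pres_class Y C T [EP a]"

definition loc_grp :: "('v, 'e) scwol \<Rightarrow> ('v, 'e, 'g) cog \<Rightarrow> 'e set \<Rightarrow>
    'v \<Rightarrow> ('v, 'g, 'e) gen list set set" where
  "loc_grp Y C T \<sigma> = iotaT Y C T \<sigma> ` carrier (grp C \<sigma>)"

definition psi_img :: "('v, 'e) scwol \<Rightarrow> ('v, 'e, 'g) cog \<Rightarrow> 'e set \<Rightarrow> 'e \<Rightarrow>
    ('v, 'g, 'e) gen list set set \<Rightarrow> ('v, 'g, 'e) gen list set set" where
  "psi_img Y C T a N =
     {iotaT Y C T (ter Y a) (psi C a g) | g.
        g \<in> carrier (grp C (ini Y a)) \<and> iotaT Y C T (ini Y a) g \<in> N}"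

section \<open>The universal cover D(Y,T) and the kernel of the action\<close>

definition D_vertices :: "('v, 'e) scwol \<Rightarrow> ('v, 'e, 'g) cog \<Rightarrow> 'e set \<Rightarrow>
    (('v, 'g, 'e) gen list set set \<times> 'v) set" where
  "D_vertices Y C T =
     {(g <#\<^bsub>pi1 Y C T\<^esub> loc_grp Y C T \<sigma>, \<sigma>) | g \<sigma>. g \<in> carrier (pi1 Y C T) \<and> \<sigma> \<in> sV Y}"

definition D_edges :: "('v, 'e) scwol \<Rightarrow> ('v, 'e, 'g) cog \<Rightarrow> 'e set \<Rightarrow>
    (('v, 'g, 'e) gen list set set \<times> 'e) set" where
  "D_edges Y C T =
     {(g <#\<^bsub>pi1 Y C T\<^esub> loc_grp Y C T (ini Y a), a) | g a. g \<in> carrier (pi1 Y C T) \<and> a \<in> sE Y}"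

definition D_act :: "('v, 'e) scwol \<Rightarrow> ('v, 'e, 'g) cog \<Rightarrow> 'e set \<Rightarrow>
    ('v, 'g, 'e) gen list set \<Rightarrow> ('v, 'g, 'e) gen list set set \<times> 'z \<Rightarrow>
    ('v, 'g, 'e) gen list set set \<times> 'z" where
  "D_act Y C T h p = (h <#\<^bsub>pi1 Y C T\<^esub> fst p, snd p)"

definition action_kernel :: "('v, 'e) scwol \<Rightarrow> ('v, 'e, 'g) cog \<Rightarrow> 'e set \<Rightarrow>
    ('v, 'g, 'e) gen list set set" where
  "action_kernel Y C T =
     {h \<in> carrier (pi1 Y C T).
        (\<forall>p \<in> D_vertices Y C T. D_act Y C T h p = p) \<and>
        (\<forall>q \<in> D_edges Y C T. D_act Y C T h q = q)}"

end

theory Submission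
  imports Defs
begin

(*
  An element h of pi_1 fixes the vertex ([g], sigma) of D(Y,T) iff g^-1 h g lies in G_sigma,
  and fixing all vertices forces fixing all edges. Hence N_T is the normal core of the family
  of local groups: the largest normal subgroup of pi_1 contained in every G_sigma. This gives
  (1) and (3) at once. Since psi_a(g) = a^+ g a^- holds in pi_1, psi_a acts on subsets of
  G_i(a) as conjugation by a^+, so (2) follows from normality. For (4), pi_1 is generated by
  the local groups and the elements a^+; a subgroup normalised by every G_sigma and by every
  a^+ is therefore normal in pi_1, hence contained in the normal core.
*)

section \<open>Cosets, conjugation and normal cores\<close>

lemma (in group) lcos_fixed_iff:
  assumes H: "subgroup H G" and g: "g \<in> carrier G" and h: "h \<in> carrier G"
  shows "h <#\<^bsub>G\<^esub> (g <#\<^bsub>G\<^esub> H) = g <#\<^bsub>G\<^esub> H \<longleftrightarrow> inv g \<otimes> h \<otimes> g \<in> H"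
proof -
  have hg: "h \<otimes> g \<in> carrier G" using g h by simp
  have "h <#\<^bsub>G\<^esub> (g <#\<^bsub>G\<^esub> H) = (h \<otimes> g) <#\<^bsub>G\<^esub> H"
    using lcos_m_assoc[OF subgroup.subset[OF H] h g] .
  moreover have "(h \<otimes> g) <#\<^bsub>G\<^esub> H = g <#\<^bsub>G\<^esub> H \<longleftrightarrow> h \<otimes> g \<in> g <#\<^bsub>G\<^esub> H"
    using lcos_self[OF hg H] l_repr_independence[OF _ g H, of "h \<otimes> g"] by auto
  moreover have "h \<otimes> g \<in> g <#\<^bsub>G\<^esub> H \<longleftrightarrow> inv g \<otimes> (h \<otimes> g) \<in> H"
    using subgroup.lcos_module_imp[OF H is_group g] subgroup.lcos_module_rev[OF H is_group g hg]
    by blast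
  ultimately show ?thesis using g h by (simp add: m_assoc)
qed

definition normal_core :: "('a, 'b) monoid_scheme \<Rightarrow> 'a set set \<Rightarrow> 'a set" where
  "normal_core G Hs =
     {h \<in> carrier G. \<forall>g \<in> carrier G. \<forall>H \<in> Hs. inv\<^bsub>G\<^esub> g \<otimes>\<^bsub>G\<^esub> h \<otimes>\<^bsub>G\<^esub> g \<in> H}"

lemma (in group) normal_coreI:
  assumes "h \<in> carrier G" and "\<And>g H. g \<in> carrier G \<Longrightarrow> H \<in> Hs \<Longrightarrow> inv g \<otimes> h \<otimes> g \<in> H"
  shows "h \<in> normal_core G Hs"
  using assms unfolding normal_core_def by simp

lemma (in group) normal_coreD:
  assumes "h \<in> normal_core G Hs"
  shows "h \<in> carrier G" and "g \<in> carrier G \<Longrightarrow> H \<in> Hs \<Longrightarrow> inv g \<otimes> h \<otimes> g \<in> H"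
  using assms unfolding normal_core_def by simp_all

lemma (in group) normal_core_subset:
  assumes "H \<in> Hs"
  shows "normal_core G Hs \<subseteq> H"
proof
  fix h assume h: "h \<in> normal_core G Hs"
  have "inv \<one> \<otimes> h \<otimes> \<one> \<in> H" by (rule normal_coreD(2)[OF h one_closed assms])
  then show "h \<in> H" using normal_coreD(1)[OF h] by simp
qed

lemma (in group) normal_core_subgroup:
  assumes Hs: "\<And>H. H \<in> Hs \<Longrightarrow> subgroup H G"
  shows "subgroup (normal_core G Hs) G"
proof (rule subgroupI)
  show "normal_core G Hs \<subseteq> carrier G" using normal_coreD(1) by blast
  have "\<one> \<in> normal_core G Hs"
    by (rule normal_coreI) (simp_all add: subgroup.one_closed[OF Hs])
  then show "normal_core G Hs \<noteq> {}" by blast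
next
  fix x assume x: "x \<in> normal_core G Hs"
  note xG = normal_coreD(1)[OF x]
  show "inv x \<in> normal_core G Hs"
  proof (rule normal_coreI)
    fix g H assume g: "g \<in> carrier G" and H: "H \<in> Hs"
    have "inv (inv g \<otimes> x \<otimes> g) \<in> H"
      using subgroup.m_inv_closed[OF Hs[OF H] normal_coreD(2)[OF x g H]] .
    moreover have "inv (inv g \<otimes> x \<otimes> g) = inv g \<otimes> inv x \<otimes> g"
      using g xG by (simp add: m_assoc inv_mult_group)
    ultimately show "inv g \<otimes> inv x \<otimes> g \<in> H" by simp
  qed (use xG in simp)
next
  fix x y assume x: "x \<in> normal_core G Hs" and y: "y \<in> normal_core G Hs"
  note xG = normal_coreD(1)[OF x] and yG = normal_coreD(1)[OF y]
  show "x \<otimes> y \<in> normal_core G Hs"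
  proof (rule normal_coreI)
    fix g H assume g: "g \<in> carrier G" and H: "H \<in> Hs"
    have "(inv g \<otimes> x \<otimes> g) \<otimes> (inv g \<otimes> y \<otimes> g) \<in> H"
      using subgroup.m_closed[OF Hs[OF H] normal_coreD(2)[OF x g H] normal_coreD(2)[OF y g H]] .
    moreover have "(inv g \<otimes> x \<otimes> g) \<otimes> (inv g \<otimes> y \<otimes> g) = inv g \<otimes> (x \<otimes> y) \<otimes> g"
      using g xG yG by (simp add: m_assoc) (simp add: m_assoc[symmetric])
    ultimately show "inv g \<otimes> (x \<otimes> y) \<otimes> g \<in> H" by simp
  qed (use xG yG in simp)
qed

lemma (in group) normal_core_normal:
  assumes "\<And>H. H \<in> Hs \<Longrightarrow> subgroup H G"
  shows "normal_core G Hs \<lhd> G"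
proof (rule normal_invI[OF normal_core_subgroup[OF assms]])
  fix x h assume x: "x \<in> carrier G" and h: "h \<in> normal_core G Hs"
  note hG = normal_coreD(1)[OF h]
  show "x \<otimes> h \<otimes> inv x \<in> normal_core G Hs"
  proof (rule normal_coreI)
    fix g H assume g: "g \<in> carrier G" and H: "H \<in> Hs"
    have "inv (inv x \<otimes> g) \<otimes> h \<otimes> (inv x \<otimes> g) \<in> H"
      using normal_coreD(2)[OF h _ H] x g by simp
    moreover have "inv (inv x \<otimes> g) \<otimes> h \<otimes> (inv x \<otimes> g) = inv g \<otimes> (x \<otimes> h \<otimes> inv x) \<otimes> g"
      using x g hG by (simp add: m_assoc inv_mult_group)
    ultimately show "inv g \<otimes> (x \<otimes> h \<otimes> inv x) \<otimes> g \<in> H" by simp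
  qed (use x hG in simp)
qed

lemma (in group) normal_core_greatest:
  assumes N: "N \<lhd> G" and sub: "\<And>H. H \<in> Hs \<Longrightarrow> N \<subseteq> H"
  shows "N \<subseteq> normal_core G Hs"
proof
  fix n assume n: "n \<in> N"
  show "n \<in> normal_core G Hs"
  proof (rule normal_coreI)
    show "n \<in> carrier G" using subgroup.mem_carrier[OF normal_imp_subgroup[OF N] n] .
    fix g H assume "g \<in> carrier G" "H \<in> Hs"
    then show "inv g \<otimes> n \<otimes> g \<in> H" using normal.inv_op_closed1[OF N _ n] sub by blast
  qed
qed

lemma (in group) conj_cancel:
  assumes "x \<in> carrier G" "y \<in> carrier G"
  shows "inv x \<otimes> (x \<otimes> y \<otimes> inv x) \<otimes> x = y" "x \<otimes> (inv x \<otimes> y \<otimes> x) \<otimes> inv x = y"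
  using assms by (simp_all add: m_assoc[symmetric]) (simp_all add: m_assoc)

lemma (in normal) conj_image_self:
  assumes x: "x \<in> carrier G"
  shows "(\<lambda>h. x \<otimes> h \<otimes> inv x) ` H = H"
proof
  show "(\<lambda>h. x \<otimes> h \<otimes> inv x) ` H \<subseteq> H" using inv_op_closed2[OF x] by blast
  have "h = x \<otimes> (inv x \<otimes> h \<otimes> x) \<otimes> inv x" if "h \<in> H" for h
    using that x mem_carrier conj_cancel(2) by simp
  then show "H \<subseteq> (\<lambda>h. x \<otimes> h \<otimes> inv x) ` H" using inv_op_closed1[OF x] by blast
qed

lemma (in group) normal_in_subgroup:
  assumes N: "N \<lhd> G" and H: "subgroup H G" and NH: "N \<subseteq> H"
  shows "N \<lhd> G\<lparr>carrier := H\<rparr>"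
  using group.normal_invI[OF subgroup_imp_group[OF H] subgroup_incl[OF normal_imp_subgroup[OF N] H NH]]
    normal.inv_op_closed2[OF N] m_inv_consistent[OF H] subgroup.mem_carrier[OF H]
  by simp

lemma (in group) conj_image_self_in_subgroup:
  assumes H: "subgroup H G" and N: "N \<lhd> G\<lparr>carrier := H\<rparr>" and x: "x \<in> H"
  shows "(\<lambda>n. x \<otimes> n \<otimes> inv x) ` N = N"
  using normal.conj_image_self[OF N, of x] x m_inv_consistent[OF H x] by simp

lemma (in group) normal_by_generators:
  assumes N: "subgroup N G" and S: "S \<subseteq> carrier G" and gen: "generate G S = carrier G"
    and conj: "\<And>s. s \<in> S \<Longrightarrow> (\<lambda>n. s \<otimes> n \<otimes> inv s) ` N = N"
  shows "N \<lhd> G"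
proof -
  have Nc: "N \<subseteq> carrier G" using subgroup.subset[OF N] .
  have conj_closed: "s \<otimes> n \<otimes> inv s \<in> N" if "s \<in> S" "n \<in> N" for s n
  proof -
    have "s \<otimes> n \<otimes> inv s \<in> (\<lambda>n. s \<otimes> n \<otimes> inv s) ` N" using that(2) by (rule imageI)
    then show ?thesis unfolding conj[OF that(1)] .
  qed
  have inv_conj_closed: "inv s \<otimes> n \<otimes> s \<in> N" if "s \<in> S" "n \<in> N" for s n
  proof -
    have "n \<in> (\<lambda>n. s \<otimes> n \<otimes> inv s) ` N" unfolding conj[OF that(1)] by (rule that(2))
    then obtain m where m: "m \<in> N" "n = s \<otimes> m \<otimes> inv s" by blast
    moreover have "s \<in> carrier G" "m \<in> carrier G" using that m S Nc by auto
    ultimately show ?thesis using conj_cancel(1) by simp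
  qed
  have "\<forall>n \<in> N. x \<otimes> n \<otimes> inv x \<in> N \<and> inv x \<otimes> n \<otimes> x \<in> N" if "x \<in> generate G S" for x
    using that
  proof (induction rule: generate.induct)
    case one
    show ?case using Nc by (simp add: subset_iff)
  next
    case (incl s)
    then show ?case using conj_closed inv_conj_closed by simp
  next
    case (inv s)
    then have "inv (inv s) = s" using S by auto
    then show ?case using conj_closed inv_conj_closed inv by simp
  next
    case (eng x y)
    have xy: "x \<in> carrier G" "y \<in> carrier G"
      using eng.hyps generate_in_carrier[OF S] by auto
    show ?case
    proof
      fix n assume n: "n \<in> N"
      then have "x \<otimes> (y \<otimes> n \<otimes> inv y) \<otimes> inv x \<in> N" "inv y \<otimes> (inv x \<otimes> n \<otimes> x) \<otimes> y \<in> N"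
        using eng.IH by simp_all
      moreover have "x \<otimes> y \<otimes> n \<otimes> inv (x \<otimes> y) = x \<otimes> (y \<otimes> n \<otimes> inv y) \<otimes> inv x"
        "inv (x \<otimes> y) \<otimes> n \<otimes> (x \<otimes> y) = inv y \<otimes> (inv x \<otimes> n \<otimes> x) \<otimes> y"
        using xy n Nc by (simp_all add: subset_iff m_assoc inv_mult_group)
      ultimately show "x \<otimes> y \<otimes> n \<otimes> inv (x \<otimes> y) \<in> N \<and> inv (x \<otimes> y) \<otimes> n \<otimes> (x \<otimes> y) \<in> N"
        by simp
    qed
  qed
  then show ?thesis
    using normal_invI[OF N] unfolding gen by blast
qed

section \<open>Groups given by the presentation of a complex of groups\<close>

lemma complex_of_groupsD:
  assumes "complex_of_groups Y C"
  shows "scwol Y"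
    and "\<sigma> \<in> sV Y \<Longrightarrow> group (grp C \<sigma>)"
    and "a \<in> sE Y \<Longrightarrow> psi C a \<in> hom (grp C (ini Y a)) (grp C (ter Y a))"
    and "(a, b) \<in> comp2 Y \<Longrightarrow> twist C a b \<in> carrier (grp C (ter Y a))"
  using assms unfolding complex_of_groups_def by auto

lemma scwolD:
  assumes "scwol Y"
  shows "a \<in> sE Y \<Longrightarrow> ini Y a \<in> sV Y"
    and "a \<in> sE Y \<Longrightarrow> ter Y a \<in> sV Y"
    and "(a, b) \<in> comp2 Y \<Longrightarrow> cmp Y a b \<in> sE Y"
  using assms unfolding scwol_def by auto

lemma complex_of_groups_ini:
  assumes "complex_of_groups Y C" and "a \<in> sE Y"
  shows "ini Y a \<in> sV Y"
  using scwolD(1)[OF complex_of_groupsD(1)[OF assms(1)] assms(2)] .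

lemma valid_word_simps [simp]:
  "valid_word Y C []"
  "valid_word Y C (l # w) \<longleftrightarrow> valid_gen Y C l \<and> valid_word Y C w"
  "valid_word Y C (x @ y) \<longleftrightarrow> valid_word Y C x \<and> valid_word Y C y"
  unfolding valid_word_def by auto

lemma valid_gen_simps [simp]:
  "valid_gen Y C (GL \<sigma> g) \<longleftrightarrow> \<sigma> \<in> sV Y \<and> g \<in> carrier (grp C \<sigma>)"
  "valid_gen Y C (EP a) \<longleftrightarrow> a \<in> sE Y"
  "valid_gen Y C (EM a) \<longleftrightarrow> a \<in> sE Y"
  unfolding valid_gen_def by auto

lemma basic_rel_valid:
  assumes cog: "complex_of_groups Y C" and lr: "(l, r) \<in> basic_rel Y C K"
  shows "valid_word Y C l \<and> valid_word Y C r"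
proof -
  note groups = complex_of_groupsD(2)[OF cog]
  have "g \<otimes>\<^bsub>grp C \<sigma>\<^esub> g' \<in> carrier (grp C \<sigma>)"
    if "\<sigma> \<in> sV Y" "g \<in> carrier (grp C \<sigma>)" "g' \<in> carrier (grp C \<sigma>)" for \<sigma> g g'
    using group.is_monoid[OF groups[OF that(1)]] that(2,3) by (rule monoid.m_closed)
  moreover have "\<one>\<^bsub>grp C \<sigma>\<^esub> \<in> carrier (grp C \<sigma>)" if "\<sigma> \<in> sV Y" for \<sigma>
    using group.is_monoid[OF groups[OF that]] by (rule monoid.one_closed)
  moreover have "psi C a g \<in> carrier (grp C (ter Y a))"
    if "a \<in> sE Y" "g \<in> carrier (grp C (ini Y a))" for a g
    using complex_of_groupsD(3)[OF cog that(1)] that(2) by (rule hom_in_carrier)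
  moreover have "a \<in> sE Y \<and> b \<in> sE Y" if "(a, b) \<in> comp2 Y" for a b
    using that unfolding comp2_def by auto
  ultimately show ?thesis
    using lr complex_of_groupsD(4)[OF cog] scwolD[OF complex_of_groupsD(1)[OF cog]]
    unfolding basic_rel_def by auto
qed

lemma pres_eq_valid:
  assumes "complex_of_groups Y C" and "pres_eq Y C K w w'"
  shows "valid_word Y C w \<and> valid_word Y C w'"
  using assms(2) by induction (use basic_rel_valid[OF assms(1)] in auto)

lemma pres_eq_append_right:
  assumes "pres_eq Y C K x x'" and "valid_word Y C y"
  shows "pres_eq Y C K (x @ y) (x' @ y)"
  using assms
proof induction
  case (pe_rel l r u v)
  then show ?case using pres_eq.pe_rel[of l r Y C K u "v @ y"] by simp
qed (auto intro: pres_eq.intros)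

lemma pres_eq_append_left:
  assumes "pres_eq Y C K x x'" and "valid_word Y C y"
  shows "pres_eq Y C K (y @ x) (y @ x')"
  using assms
proof induction
  case (pe_rel l r u v)
  then show ?case using pres_eq.pe_rel[of l r Y C K "y @ u" v] by simp
qed (auto intro: pres_eq.intros)

lemma pres_eq_append:
  assumes cog: "complex_of_groups Y C" and x: "pres_eq Y C K x x'" and y: "pres_eq Y C K y y'"
  shows "pres_eq Y C K (x @ y) (x' @ y')"
proof -
  have "pres_eq Y C K (x @ y) (x' @ y)"
    using pres_eq_append_right[OF x] pres_eq_valid[OF cog y] by blast
  moreover have "pres_eq Y C K (x' @ y) (x' @ y')"
    using pres_eq_append_left[OF y] pres_eq_valid[OF cog x] by blast
  ultimately show ?thesis by (rule pres_eq.pe_trans)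
qed

lemma pres_class_eq: "pres_eq Y C K x y \<Longrightarrow> pres_class Y C K x = pres_class Y C K y"
  unfolding pres_class_def by (auto intro: pres_eq.pe_trans pres_eq.pe_sym)

lemma pres_class_mult:
  assumes cog: "complex_of_groups Y C" and "valid_word Y C x" and "valid_word Y C y"
  shows "pres_class Y C K x \<otimes>\<^bsub>pres_group Y C K\<^esub> pres_class Y C K y = pres_class Y C K (x @ y)"
proof -
  have "pres_eq Y C K (x @ y) w"
    if "pres_eq Y C K x x'" "pres_eq Y C K y y'" "pres_eq Y C K (x' @ y') w" for x' y' w
    using pres_eq_append[OF cog that(1,2)] that(3) by (rule pres_eq.pe_trans)
  moreover have "pres_eq Y C K x x" "pres_eq Y C K y y"
    using assms by (auto intro: pres_eq.pe_refl)
  ultimately show ?thesis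
    unfolding pres_group_def pres_class_def by auto
qed

fun letter_inv :: "('v, 'e, 'g) cog \<Rightarrow> ('v, 'g, 'e) gen \<Rightarrow> ('v, 'g, 'e) gen" where
  "letter_inv C (GL \<sigma> g) = GL \<sigma> (inv\<^bsub>grp C \<sigma>\<^esub> g)"
| "letter_inv C (EP a) = EM a"
| "letter_inv C (EM a) = EP a"

definition word_inv :: "('v, 'e, 'g) cog \<Rightarrow> ('v, 'g, 'e) gen list \<Rightarrow> ('v, 'g, 'e) gen list" where
  "word_inv C w = rev (map (letter_inv C) w)"

lemma letter_inv_valid:
  assumes "complex_of_groups Y C" and "valid_gen Y C l"
  shows "valid_gen Y C (letter_inv C l)"
  using assms by (cases l) (auto dest: complex_of_groupsD(2) intro: group.inv_closed)

lemma word_inv_valid: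
  assumes "complex_of_groups Y C" and "valid_word Y C w"
  shows "valid_word Y C (word_inv C w)"
  using assms letter_inv_valid unfolding word_inv_def valid_word_def by auto

lemma letter_inv_cancel:
  assumes cog: "complex_of_groups Y C" and l: "valid_gen Y C l"
  shows "pres_eq Y C K [letter_inv C l, l] []"
proof (cases l)
  case (GL \<sigma> g)
  then have \<sigma>: "\<sigma> \<in> sV Y" and g: "g \<in> carrier (grp C \<sigma>)" using l by auto
  interpret G\<sigma>: group "grp C \<sigma>" using complex_of_groupsD(2)[OF cog \<sigma>] .
  have "([GL \<sigma> (inv\<^bsub>grp C \<sigma>\<^esub> g), GL \<sigma> g], [GL \<sigma> \<one>\<^bsub>grp C \<sigma>\<^esub>]) \<in> basic_rel Y C K"
    unfolding basic_rel_def using \<sigma> g G\<sigma>.inv_closed G\<sigma>.l_inv by fastforce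
  moreover have "([GL \<sigma> \<one>\<^bsub>grp C \<sigma>\<^esub>], []) \<in> basic_rel Y C K"
    unfolding basic_rel_def using \<sigma> by blast
  ultimately show ?thesis
    using GL pres_eq.pe_rel[of _ _ Y C K "[]" "[]"] pres_eq.pe_trans by fastforce
next
  case (EP a)
  then show ?thesis
    using pres_eq.pe_rel[of "[EM a, EP a]" "[]" Y C K "[]" "[]"] l unfolding basic_rel_def by auto
next
  case (EM a)
  then show ?thesis
    using pres_eq.pe_rel[of "[EP a, EM a]" "[]" Y C K "[]" "[]"] l unfolding basic_rel_def by auto
qed

lemma word_inv_cancel:
  assumes cog: "complex_of_groups Y C" and "valid_word Y C w"
  shows "pres_eq Y C K (word_inv C w @ w) []"
  using assms(2)
proof (induction w)
  case Nil
  then show ?case by (simp add: word_inv_def pres_eq.pe_refl)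
next
  case (Cons l w)
  have valid: "valid_word Y C (word_inv C w)" "valid_word Y C w" "valid_gen Y C l"
    using Cons.prems word_inv_valid[OF cog] by auto
  have "word_inv C (l # w) @ l # w = word_inv C w @ [letter_inv C l, l] @ w"
    by (simp add: word_inv_def)
  moreover have "pres_eq Y C K (word_inv C w @ [letter_inv C l, l] @ w) (word_inv C w @ w)"
    using pres_eq_append_left[OF pres_eq_append_right[OF letter_inv_cancel[OF cog valid(3)]]] valid
    by simp
  ultimately show ?case using Cons pres_eq.pe_trans valid by metis
qed

lemma group_pres_group:
  assumes cog: "complex_of_groups Y C"
  shows "group (pres_group Y C K)"
proof (rule groupI)
  let ?G = "pres_group Y C K"
  have carrier: "carrier ?G = pres_class Y C K ` {w. valid_word Y C w}"
    and one: "\<one>\<^bsub>?G\<^esub> = pres_class Y C K []"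
    unfolding pres_group_def by simp_all
  note mult = pres_class_mult[OF cog]
  show "\<one>\<^bsub>?G\<^esub> \<in> carrier ?G" using carrier one by auto
  show "x \<otimes>\<^bsub>?G\<^esub> y \<in> carrier ?G" if "x \<in> carrier ?G" "y \<in> carrier ?G" for x y
    using that carrier mult by fastforce
  show "x \<otimes>\<^bsub>?G\<^esub> y \<otimes>\<^bsub>?G\<^esub> z = x \<otimes>\<^bsub>?G\<^esub> (y \<otimes>\<^bsub>?G\<^esub> z)"
    if "x \<in> carrier ?G" "y \<in> carrier ?G" "z \<in> carrier ?G" for x y z
    using that carrier mult by fastforce
  show "\<one>\<^bsub>?G\<^esub> \<otimes>\<^bsub>?G\<^esub> x = x" if "x \<in> carrier ?G" for x
    using that carrier one mult by fastforce
  show "\<exists>y \<in> carrier ?G. y \<otimes>\<^bsub>?G\<^esub> x = \<one>\<^bsub>?G\<^esub>" if x: "x \<in> carrier ?G" for x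
  proof -
    obtain w where w: "valid_word Y C w" "x = pres_class Y C K w" using x carrier by auto
    have "pres_class Y C K (word_inv C w) \<otimes>\<^bsub>?G\<^esub> x = pres_class Y C K (word_inv C w @ w)"
      using w mult word_inv_valid[OF cog] by simp
    also have "\<dots> = \<one>\<^bsub>?G\<^esub>"
      using pres_class_eq[OF word_inv_cancel[OF cog w(1)]] one by simp
    finally have "pres_class Y C K (word_inv C w) \<otimes>\<^bsub>?G\<^esub> x = \<one>\<^bsub>?G\<^esub>" .
    then show ?thesis using carrier word_inv_valid[OF cog w(1)] by blast
  qed
qed

section \<open>The fundamental group and its generators\<close>

lemma group_pi1: "complex_of_groups Y C \<Longrightarrow> group (pi1 Y C T)"
  unfolding pi1_def by (rule group_pres_group)

lemma carrier_pi1: "carrier (pi1 Y C T) = pres_class Y C T ` {w. valid_word Y C w}"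
  unfolding pi1_def pres_group_def by simp

lemma one_pi1: "\<one>\<^bsub>pi1 Y C T\<^esub> = pres_class Y C T []"
  unfolding pi1_def pres_group_def by simp

lemma pres_class_mult_pi1:
  "complex_of_groups Y C \<Longrightarrow> valid_word Y C x \<Longrightarrow> valid_word Y C y \<Longrightarrow>
   pres_class Y C T x \<otimes>\<^bsub>pi1 Y C T\<^esub> pres_class Y C T y = pres_class Y C T (x @ y)"
  unfolding pi1_def by (rule pres_class_mult)

lemma pres_class_in_pi1: "valid_word Y C w \<Longrightarrow> pres_class Y C T w \<in> carrier (pi1 Y C T)"
  unfolding carrier_pi1 by blast

lemma basic_rel_pres_class_eq:
  "(l, r) \<in> basic_rel Y C T \<Longrightarrow> pres_class Y C T l = pres_class Y C T r"
  using pres_class_eq pres_eq.pe_rel[of l r Y C T "[]" "[]"] by simp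

lemma iotaT_hom:
  assumes cog: "complex_of_groups Y C" and \<sigma>: "\<sigma> \<in> sV Y"
  shows "iotaT Y C T \<sigma> \<in> hom (grp C \<sigma>) (pi1 Y C T)"
proof (rule homI)
  show "iotaT Y C T \<sigma> g \<in> carrier (pi1 Y C T)" if "g \<in> carrier (grp C \<sigma>)" for g
    unfolding iotaT_def using \<sigma> that by (simp add: pres_class_in_pi1)
  fix g g' assume g: "g \<in> carrier (grp C \<sigma>)" and g': "g' \<in> carrier (grp C \<sigma>)"
  have "([GL \<sigma> g, GL \<sigma> g'], [GL \<sigma> (g \<otimes>\<^bsub>grp C \<sigma>\<^esub> g')]) \<in> basic_rel Y C T"
    unfolding basic_rel_def using \<sigma> g g' by blast
  then show "iotaT Y C T \<sigma> (g \<otimes>\<^bsub>grp C \<sigma>\<^esub> g') = iotaT Y C T \<sigma> g \<otimes>\<^bsub>pi1 Y C T\<^esub> iotaT Y C T \<sigma> g'"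
    unfolding iotaT_def
    using basic_rel_pres_class_eq[OF \<open>(_, _) \<in> basic_rel Y C T\<close>]
      pres_class_mult_pi1[OF cog, of "[GL \<sigma> g]" "[GL \<sigma> g']"] \<sigma> g g'
    by simp
qed

lemma loc_grp_subgroup:
  assumes cog: "complex_of_groups Y C" and \<sigma>: "\<sigma> \<in> sV Y"
  shows "subgroup (loc_grp Y C T \<sigma>) (pi1 Y C T)"
proof -
  have "group_hom (grp C \<sigma>) (pi1 Y C T) (iotaT Y C T \<sigma>)"
    using complex_of_groupsD(2)[OF cog \<sigma>] group_pi1[OF cog] iotaT_hom[OF cog \<sigma>]
    by (simp add: group_hom_def group_hom_axioms_def)
  then show ?thesis unfolding loc_grp_def by (rule group_hom.img_is_subgroup)
qed

lemma iotaT_edge_in_pi1: "a \<in> sE Y \<Longrightarrow> iotaT_edge Y C T a \<in> carrier (pi1 Y C T)"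
  unfolding iotaT_edge_def by (simp add: pres_class_in_pi1)

lemma inv_iotaT_edge:
  assumes cog: "complex_of_groups Y C" and a: "a \<in> sE Y"
  shows "inv\<^bsub>pi1 Y C T\<^esub> (iotaT_edge Y C T a) = pres_class Y C T [EM a]"
proof -
  interpret pi1: group "pi1 Y C T" using group_pi1[OF cog] .
  have "([EM a, EP a], []) \<in> basic_rel Y C T" unfolding basic_rel_def using a by blast
  then have "pres_class Y C T [EM a] \<otimes>\<^bsub>pi1 Y C T\<^esub> iotaT_edge Y C T a = \<one>\<^bsub>pi1 Y C T\<^esub>"
    unfolding iotaT_edge_def one_pi1
    using pres_class_mult_pi1[OF cog, of "[EM a]" "[EP a]"] basic_rel_pres_class_eq a by simp
  moreover have "pres_class Y C T [EM a] \<in> carrier (pi1 Y C T)"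
    using a by (simp add: pres_class_in_pi1)
  ultimately show ?thesis using pi1.inv_equality iotaT_edge_in_pi1[OF a] by blast
qed

lemma iotaT_psi:
  assumes cog: "complex_of_groups Y C" and a: "a \<in> sE Y" and g: "g \<in> carrier (grp C (ini Y a))"
  shows "iotaT Y C T (ter Y a) (psi C a g) =
    iotaT_edge Y C T a \<otimes>\<^bsub>pi1 Y C T\<^esub> iotaT Y C T (ini Y a) g
      \<otimes>\<^bsub>pi1 Y C T\<^esub> inv\<^bsub>pi1 Y C T\<^esub> (iotaT_edge Y C T a)"
proof -
  have ini: "ini Y a \<in> sV Y" using complex_of_groups_ini[OF cog a] .
  have "iotaT_edge Y C T a \<otimes>\<^bsub>pi1 Y C T\<^esub> iotaT Y C T (ini Y a) g
      \<otimes>\<^bsub>pi1 Y C T\<^esub> inv\<^bsub>pi1 Y C T\<^esub> (iotaT_edge Y C T a)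
    = pres_class Y C T [EP a, GL (ini Y a) g, EM a]"
    unfolding inv_iotaT_edge[OF cog a] unfolding iotaT_def iotaT_edge_def
    using pres_class_mult_pi1[OF cog, of "[EP a]" "[GL (ini Y a) g]"]
      pres_class_mult_pi1[OF cog, of "[EP a, GL (ini Y a) g]" "[EM a]"] a g ini
    by simp
  also have "\<dots> = iotaT Y C T (ter Y a) (psi C a g)"
    unfolding iotaT_def
    by (rule basic_rel_pres_class_eq[symmetric]) (use a g in \<open>auto simp: basic_rel_def\<close>)
  finally show ?thesis ..
qed

definition pi1_generators :: "('v, 'e) scwol \<Rightarrow> ('v, 'e, 'g) cog \<Rightarrow> 'e set \<Rightarrow>
    ('v, 'g, 'e) gen list set set" where
  "pi1_generators Y C T = (\<Union>\<sigma> \<in> sV Y. loc_grp Y C T \<sigma>) \<union> iotaT_edge Y C T ` sE Y"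

lemma pi1_generators_subset:
  assumes cog: "complex_of_groups Y C"
  shows "pi1_generators Y C T \<subseteq> carrier (pi1 Y C T)"
proof -
  have "loc_grp Y C T \<sigma> \<subseteq> carrier (pi1 Y C T)" if "\<sigma> \<in> sV Y" for \<sigma>
    using loc_grp_subgroup[OF cog that] by (rule subgroup.subset)
  moreover have "iotaT_edge Y C T ` sE Y \<subseteq> carrier (pi1 Y C T)"
    by (rule image_subsetI) (rule iotaT_edge_in_pi1)
  ultimately show ?thesis unfolding pi1_generators_def by blast
qed

lemma generate_pi1_generators:
  assumes cog: "complex_of_groups Y C"
  shows "generate (pi1 Y C T) (pi1_generators Y C T) = carrier (pi1 Y C T)"
    (is "generate _ ?S = _")
proof
  interpret pi1: group "pi1 Y C T" using group_pi1[OF cog] .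
  show "generate (pi1 Y C T) ?S \<subseteq> carrier (pi1 Y C T)"
    using pi1.generate_in_carrier[OF pi1_generators_subset[OF cog]] by blast
  have letter: "pres_class Y C T [l] \<in> generate (pi1 Y C T) ?S" if l: "valid_gen Y C l" for l
  proof (cases l)
    case (GL \<sigma> g)
    then have "pres_class Y C T [l] \<in> ?S"
      using l unfolding pi1_generators_def loc_grp_def iotaT_def by auto
    then show ?thesis by (rule generate.incl)
  next
    case (EP a)
    then have "pres_class Y C T [l] \<in> ?S"
      using l unfolding pi1_generators_def iotaT_edge_def by auto
    then show ?thesis by (rule generate.incl)
  next
    case (EM a)
    then have "a \<in> sE Y" using l by simp
    then have "inv\<^bsub>pi1 Y C T\<^esub> (iotaT_edge Y C T a) \<in> generate (pi1 Y C T) ?S"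
      unfolding pi1_generators_def by (intro generate.inv) blast
    then show ?thesis unfolding EM inv_iotaT_edge[OF cog \<open>a \<in> sE Y\<close>] .
  qed
  have "pres_class Y C T w \<in> generate (pi1 Y C T) ?S" if "valid_word Y C w" for w
    using that
  proof (induction w)
    case Nil
    show ?case unfolding one_pi1[symmetric] by (rule generate.one)
  next
    case (Cons l w)
    then have "pres_class Y C T [l] \<otimes>\<^bsub>pi1 Y C T\<^esub> pres_class Y C T w \<in> generate (pi1 Y C T) ?S"
      using letter by (intro generate.eng) simp_all
    then show ?case using pres_class_mult_pi1[OF cog, of "[l]" w] Cons.prems by simp
  qed
  then show "carrier (pi1 Y C T) \<subseteq> generate (pi1 Y C T) ?S"
    unfolding carrier_pi1 by blast
qed

lemma psi_img_conj:
  assumes cog: "complex_of_groups Y C" and a: "a \<in> sE Y" and N: "N \<subseteq> loc_grp Y C T (ini Y a)"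
  shows "psi_img Y C T a N =
    (\<lambda>n. iotaT_edge Y C T a \<otimes>\<^bsub>pi1 Y C T\<^esub> n \<otimes>\<^bsub>pi1 Y C T\<^esub> inv\<^bsub>pi1 Y C T\<^esub> (iotaT_edge Y C T a)) ` N"
    (is "_ = ?conj ` N")
proof
  show "psi_img Y C T a N \<subseteq> ?conj ` N"
  proof
    fix x assume "x \<in> psi_img Y C T a N"
    then obtain g where g: "g \<in> carrier (grp C (ini Y a))" "iotaT Y C T (ini Y a) g \<in> N"
      and x: "x = iotaT Y C T (ter Y a) (psi C a g)"
      unfolding psi_img_def by blast
    show "x \<in> ?conj ` N" unfolding x iotaT_psi[OF cog a g(1)] using g(2) by (rule imageI)
  qed
  show "?conj ` N \<subseteq> psi_img Y C T a N"
  proof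
    fix x assume "x \<in> ?conj ` N"
    then obtain n where n: "n \<in> N" and x: "x = ?conj n" by blast
    then obtain g where g: "g \<in> carrier (grp C (ini Y a))" and "n = iotaT Y C T (ini Y a) g"
      using N unfolding loc_grp_def by blast
    then have "x = iotaT Y C T (ter Y a) (psi C a g)" unfolding x iotaT_psi[OF cog a g] by simp
    then show "x \<in> psi_img Y C T a N" unfolding psi_img_def using g n \<open>n = _\<close> by blast
  qed
qed

section \<open>The kernel of the action on the universal cover\<close>

lemma action_kernel_iff_fixes_vertices:
  assumes cog: "complex_of_groups Y C"
  shows "h \<in> action_kernel Y C T \<longleftrightarrow>
    h \<in> carrier (pi1 Y C T) \<and> (\<forall>p \<in> D_vertices Y C T. D_act Y C T h p = p)"
proof -
  \<comment> \<open>An edge \<open>([g], a)\<close> is fixed as soon as its initial vertex \<open>([g], i(a))\<close> is.\<close>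
  have "\<forall>q \<in> D_edges Y C T. D_act Y C T h q = q"
    if "\<forall>p \<in> D_vertices Y C T. D_act Y C T h p = p"
    using that complex_of_groups_ini[OF cog]
    unfolding D_vertices_def D_edges_def D_act_def by fastforce
  then show ?thesis unfolding action_kernel_def by blast
qed

lemma action_kernel_eq_normal_core:
  assumes cog: "complex_of_groups Y C"
  shows "action_kernel Y C T = normal_core (pi1 Y C T) (loc_grp Y C T ` sV Y)"
proof (rule Set.set_eqI)
  interpret pi1: group "pi1 Y C T" using group_pi1[OF cog] .
  fix h
  show "h \<in> action_kernel Y C T \<longleftrightarrow> h \<in> normal_core (pi1 Y C T) (loc_grp Y C T ` sV Y)"
  proof (cases "h \<in> carrier (pi1 Y C T)")
    case True
    have "h \<in> action_kernel Y C T \<longleftrightarrow> (\<forall>g \<in> carrier (pi1 Y C T). \<forall>\<sigma> \<in> sV Y.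
        h <#\<^bsub>pi1 Y C T\<^esub> (g <#\<^bsub>pi1 Y C T\<^esub> loc_grp Y C T \<sigma>) = g <#\<^bsub>pi1 Y C T\<^esub> loc_grp Y C T \<sigma>)"
      unfolding action_kernel_iff_fixes_vertices[OF cog] D_vertices_def D_act_def using True by auto
    also have "\<dots> \<longleftrightarrow> (\<forall>g \<in> carrier (pi1 Y C T). \<forall>\<sigma> \<in> sV Y.
        inv\<^bsub>pi1 Y C T\<^esub> g \<otimes>\<^bsub>pi1 Y C T\<^esub> h \<otimes>\<^bsub>pi1 Y C T\<^esub> g \<in> loc_grp Y C T \<sigma>)"
      using pi1.lcos_fixed_iff[OF loc_grp_subgroup[OF cog] _ True] by simp
    also have "\<dots> \<longleftrightarrow> h \<in> normal_core (pi1 Y C T) (loc_grp Y C T ` sV Y)"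
      unfolding normal_core_def using True by blast
    finally show ?thesis .
  next
    case False
    then show ?thesis unfolding action_kernel_def normal_core_def by blast
  qed
qed

lemma normal_pi1_if_psi_img_stable:
  assumes cog: "complex_of_groups Y C" and N: "subgroup N (pi1 Y C T)"
    and loc: "\<And>\<sigma>. \<sigma> \<in> sV Y \<Longrightarrow> N \<subseteq> loc_grp Y C T \<sigma>"
    and loc_normal: "\<And>\<sigma>. \<sigma> \<in> sV Y \<Longrightarrow> N \<lhd> (pi1 Y C T)\<lparr>carrier := loc_grp Y C T \<sigma>\<rparr>"
    and psi: "\<And>a. a \<in> sE Y \<Longrightarrow> psi_img Y C T a N = N"
  shows "N \<lhd> pi1 Y C T"
proof -
  interpret pi1: group "pi1 Y C T" using group_pi1[OF cog] .
  note ini = complex_of_groups_ini[OF cog]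
  show ?thesis
  proof (rule pi1.normal_by_generators[OF N pi1_generators_subset[OF cog] generate_pi1_generators[OF cog]])
    fix s assume "s \<in> pi1_generators Y C T"
    then consider \<sigma> where "\<sigma> \<in> sV Y" "s \<in> loc_grp Y C T \<sigma>" | a where "a \<in> sE Y" "s = iotaT_edge Y C T a"
      unfolding pi1_generators_def by blast
    then show "(\<lambda>n. s \<otimes>\<^bsub>pi1 Y C T\<^esub> n \<otimes>\<^bsub>pi1 Y C T\<^esub> inv\<^bsub>pi1 Y C T\<^esub> s) ` N = N"
    proof cases
      case (1 \<sigma>)
      show ?thesis
        using pi1.conj_image_self_in_subgroup[OF loc_grp_subgroup[OF cog 1(1)] loc_normal[OF 1(1)] 1(2)] .
    next
      case (2 a)
      then show ?thesis
        using psi_img_conj[OF cog 2(1) loc[OF ini[OF 2(1)]]] psi[OF 2(1)] by simp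
    qed
  qed
qed

theorem mainTheorem3:
  fixes Y :: "('v, 'e) scwol" and C :: "('v, 'e, 'g) cog" and T :: "'e set"
    and \<Gamma> :: "'x monoid" and W :: "('w, 'f) scwol"
    and aV :: "'x \<Rightarrow> 'w \<Rightarrow> 'w" and aE :: "'x \<Rightarrow> 'f \<Rightarrow> 'f"
    and pV :: "'w \<Rightarrow> 'v" and pE :: "'f \<Rightarrow> 'e"
  assumes cog: "complex_of_groups Y C"
    and dev: "developable_via Y C \<Gamma> W aV aE pV pE"
    and conn: "scwol_connected Y"
    and tree: "maximal_tree Y T"
  shows "(\<forall>\<sigma> \<in> sV Y. action_kernel Y C T \<subseteq> loc_grp Y C T \<sigma>)
       \<and> (\<forall>a \<in> sE Y. psi_img Y C T a (action_kernel Y C T) = action_kernel Y C T)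
       \<and> (\<forall>\<sigma> \<in> sV Y. action_kernel Y C T \<lhd> (pi1 Y C T)\<lparr>carrier := loc_grp Y C T \<sigma>\<rparr>)
       \<and> (\<forall>N'. subgroup N' (pi1 Y C T) \<and>
              (\<forall>\<sigma> \<in> sV Y. N' \<subseteq> loc_grp Y C T \<sigma>) \<and>
              (\<forall>\<sigma> \<in> sV Y. N' \<lhd> (pi1 Y C T)\<lparr>carrier := loc_grp Y C T \<sigma>\<rparr>) \<and>
              (\<forall>a \<in> sE Y. psi_img Y C T a N' = N')
            \<longrightarrow> N' \<subseteq> action_kernel Y C T)"
proof (intro conjI allI impI ballI)
  interpret pi1: group "pi1 Y C T" using group_pi1[OF cog] .
  note kernel = action_kernel_eq_normal_core[OF cog]
  note loc_subgroup = loc_grp_subgroup[OF cog]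
  have normal: "action_kernel Y C T \<lhd> pi1 Y C T"
    unfolding kernel using loc_subgroup by (auto intro: pi1.normal_core_normal)
  show sub: "action_kernel Y C T \<subseteq> loc_grp Y C T \<sigma>" if "\<sigma> \<in> sV Y" for \<sigma>
    unfolding kernel using that by (intro pi1.normal_core_subset) simp
  show "action_kernel Y C T \<lhd> (pi1 Y C T)\<lparr>carrier := loc_grp Y C T \<sigma>\<rparr>" if "\<sigma> \<in> sV Y" for \<sigma>
    using pi1.normal_in_subgroup[OF normal loc_subgroup[OF that] sub[OF that]] .
  show "psi_img Y C T a (action_kernel Y C T) = action_kernel Y C T" if a: "a \<in> sE Y" for a
    using psi_img_conj[OF cog a sub[OF complex_of_groups_ini[OF cog a]]]
      normal.conj_image_self[OF normal iotaT_edge_in_pi1[OF a]] by simp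
  show "N' \<subseteq> action_kernel Y C T"
    if "subgroup N' (pi1 Y C T) \<and> (\<forall>\<sigma> \<in> sV Y. N' \<subseteq> loc_grp Y C T \<sigma>) \<and>
        (\<forall>\<sigma> \<in> sV Y. N' \<lhd> (pi1 Y C T)\<lparr>carrier := loc_grp Y C T \<sigma>\<rparr>) \<and>
        (\<forall>a \<in> sE Y. psi_img Y C T a N' = N')" for N'
  proof -
    have "N' \<lhd> pi1 Y C T" using that by (intro normal_pi1_if_psi_img_stable[OF cog]) auto
    then show ?thesis unfolding kernel using that by (intro pi1.normal_core_greatest) auto
  qed
qed

end
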